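(* Let $\Gamma$ be a simple, undirected, connected graph of order $p\ge 2$, minimum degree $\delta$ and maximum degree $\Delta$. Then $$\gamma_{[3R]}(\Gamma)\le \left\lfloor \frac{4p}{\delta+1}\left(\ln\left(\frac{3(\delta+1)}{4}\right)+1\right)\right\rfloor.$$
   Context: For a graph $\Gamma=(V,E)$ and $h:V\to\{0,1,2,3,4\}$, let $AN(v)=\{w\in N(v):h(w)\ge 1\}$, $AN[v]=AN(v)\cup\{v\}$ and $h(S)=\sum_{u\in S}h(u)$. $h$ is a triple Roman dominating function (3RDF) if every $v$ with $h(v)<3$ satisfies $h(AN[v])\ge|AN(v)|+3$. The triple Roman domination number $\gamma_{[3R]}(\Gamma)$ is the minimum weight $h(V)$ of a 3RDF of $\Gamma$. *)

theory Defs
  imports Complex_Main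
begin

definition simple_graph :: "'a set \<Rightarrow> ('a \<Rightarrow> 'a \<Rightarrow> bool) \<Rightarrow> bool" where
  "simple_graph V E \<longleftrightarrow> finite V \<and> (\<forall>u v. E u v \<longrightarrow> u \<in> V \<and> v \<in> V)
     \<and> (\<forall>u v. E u v \<longrightarrow> E v u) \<and> (\<forall>v. \<not> E v v)"

definition neighbours :: "'a set \<Rightarrow> ('a \<Rightarrow> 'a \<Rightarrow> bool) \<Rightarrow> 'a \<Rightarrow> 'a set" where
  "neighbours V E v = {w \<in> V. E v w}"

definition degree :: "'a set \<Rightarrow> ('a \<Rightarrow> 'a \<Rightarrow> bool) \<Rightarrow> 'a \<Rightarrow> nat" where
  "degree V E v = card (neighbours V E v)"

definition min_degree :: "'a set \<Rightarrow> ('a \<Rightarrow> 'a \<Rightarrow> bool) \<Rightarrow> nat" where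
  "min_degree V E = Min (degree V E ` V)"

definition max_degree :: "'a set \<Rightarrow> ('a \<Rightarrow> 'a \<Rightarrow> bool) \<Rightarrow> nat" where
  "max_degree V E = Max (degree V E ` V)"

definition connected_graph :: "'a set \<Rightarrow> ('a \<Rightarrow> 'a \<Rightarrow> bool) \<Rightarrow> bool" where
  "connected_graph V E \<longleftrightarrow> (\<forall>u\<in>V. \<forall>v\<in>V. E\<^sup>*\<^sup>* u v)"

definition active_nbrs :: "'a set \<Rightarrow> ('a \<Rightarrow> 'a \<Rightarrow> bool) \<Rightarrow> ('a \<Rightarrow> nat) \<Rightarrow> 'a \<Rightarrow> 'a set" where
  "active_nbrs V E h v = {w \<in> neighbours V E v. h w \<ge> 1}"

definition is_3RDF :: "'a set \<Rightarrow> ('a \<Rightarrow> 'a \<Rightarrow> bool) \<Rightarrow> ('a \<Rightarrow> nat) \<Rightarrow> bool" where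
  "is_3RDF V E h \<longleftrightarrow> (\<forall>v. v \<notin> V \<longrightarrow> h v = 0) \<and> (\<forall>v\<in>V. h v \<le> 4) \<and>
     (\<forall>v\<in>V. h v < 3 \<longrightarrow>
        sum h (insert v (active_nbrs V E h v)) \<ge> card (active_nbrs V E h v) + 3)"

definition weight :: "'a set \<Rightarrow> ('a \<Rightarrow> nat) \<Rightarrow> nat" where
  "weight V h = sum h V"

definition triple_roman_domination_number :: "'a set \<Rightarrow> ('a \<Rightarrow> 'a \<Rightarrow> bool) \<Rightarrow> nat" where
  "triple_roman_domination_number V E = Min {weight V h | h. is_3RDF V E h}"

end

theory Submission imports Defs begin

(* Probabilistic method. Put each vertex into S independently with probability q, and let h
   be 4 on S, 3 on the vertices whose closed neighbourhood misses S, and 0 elsewhere; h is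
   always a 3RDF. A vertex of degree k escapes S with its whole closed neighbourhood with
   probability (1 - q)^(k + 1) <= exp (- q (delta + 1)), so the expected weight of h is at most
   p (4 q + 3 exp (- q (delta + 1))), and some S does at least as well. Taking
   q = ln (3 (delta + 1) / 4) / (delta + 1), which lies in [0, 1] because connectedness and
   p >= 2 force delta >= 1, gives the bound. Expectations are written as finite sums over Pow V
   weighted by the product distribution. *)

definition bernoulli_weight :: "'a set \<Rightarrow> real \<Rightarrow> 'a set \<Rightarrow> real" where
  "bernoulli_weight A q S = q ^ card S * (1 - q) ^ card (A - S)"

lemma bernoulli_weight_nonneg: "0 \<le> q \<Longrightarrow> q \<le> 1 \<Longrightarrow> 0 \<le> bernoulli_weight A q S"
  by (simp add: bernoulli_weight_def)

lemma sum_bernoulli_weight_disjoint: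
  assumes "finite A" "B \<subseteq> A"
  shows "(\<Sum>S\<in>Pow A. bernoulli_weight A q S * of_bool (B \<inter> S = {})) = (1 - q) ^ card B"
proof -
  define f where "f x = (if x \<in> B then 0 else q)" for x
  have "(\<Sum>S\<in>Pow A. bernoulli_weight A q S * of_bool (B \<inter> S = {}))
      = (\<Sum>S\<in>Pow A. (\<Prod>x\<in>S. f x) * (\<Prod>x\<in>A - S. 1 - q))"
  proof (rule sum.cong)
    fix S assume "S \<in> Pow A"
    then have "finite S" using assms(1) finite_subset by blast
    show "bernoulli_weight A q S * of_bool (B \<inter> S = {}) = (\<Prod>x\<in>S. f x) * (\<Prod>x\<in>A - S. 1 - q)"
    proof (cases "B \<inter> S = {}")
      case True
      then have "(\<Prod>x\<in>S. f x) = (\<Prod>x\<in>S. q)" by (intro prod.cong) (auto simp: f_def)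
      with True show ?thesis by (simp add: bernoulli_weight_def)
    next
      case False
      then have "(\<Prod>x\<in>S. f x) = 0" using \<open>finite S\<close> by (auto simp: f_def)
      with False show ?thesis by simp
    qed
  qed simp
  also have "\<dots> = (\<Prod>x\<in>A. f x + (1 - q))" by (rule prod_add[symmetric]) fact
  also have "\<dots> = (\<Prod>x\<in>A. if x \<in> B then 1 - q else 1)" by (rule prod.cong) (auto simp: f_def)
  also have "\<dots> = (1 - q) ^ card B" using assms by (simp add: prod.If_cases Int_absorb1)
  finally show ?thesis .
qed

lemma sum_bernoulli_weight: "finite A \<Longrightarrow> (\<Sum>S\<in>Pow A. bernoulli_weight A q S) = 1"
  using sum_bernoulli_weight_disjoint[of A "{}" q] by simp

lemma sum_bernoulli_weight_mem:
  assumes "finite A" "y \<in> A"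
  shows "(\<Sum>S\<in>Pow A. bernoulli_weight A q S * of_bool (y \<in> S)) = q"
proof -
  have "(\<Sum>S\<in>Pow A. bernoulli_weight A q S * of_bool (y \<in> S))
      = (\<Sum>S\<in>Pow A. bernoulli_weight A q S)
        - (\<Sum>S\<in>Pow A. bernoulli_weight A q S * of_bool ({y} \<inter> S = {}))"
    unfolding sum_subtractf[symmetric] by (intro sum.cong) auto
  also have "\<dots> = q"
    using assms sum_bernoulli_weight sum_bernoulli_weight_disjoint[of A "{y}" q] by simp
  finally show ?thesis .
qed

lemma sum_bernoulli_weight_card:
  assumes "finite A"
  shows "(\<Sum>S\<in>Pow A. bernoulli_weight A q S * card S) = real (card A) * q"
proof -
  have "(\<Sum>S\<in>Pow A. bernoulli_weight A q S * card S)
      = (\<Sum>S\<in>Pow A. \<Sum>y\<in>A. bernoulli_weight A q S * of_bool (y \<in> S))"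
  proof (rule sum.cong)
    fix S assume "S \<in> Pow A"
    then have "real (card S) = (\<Sum>y\<in>A. of_bool (y \<in> S))"
      using assms by (simp add: sum_of_bool_eq Int_absorb1)
    then show "bernoulli_weight A q S * card S = (\<Sum>y\<in>A. bernoulli_weight A q S * of_bool (y \<in> S))"
      by (simp add: sum_distrib_left)
  qed simp
  also have "\<dots> = (\<Sum>y\<in>A. \<Sum>S\<in>Pow A. bernoulli_weight A q S * of_bool (y \<in> S))"
    by (rule sum.swap)
  also have "\<dots> = real (card A) * q" using sum_bernoulli_weight_mem[OF assms] by simp
  finally show ?thesis .
qed

lemma ex_le_weighted_average:
  fixes w f :: "'i \<Rightarrow> real"
  assumes "finite I" "\<And>i. i \<in> I \<Longrightarrow> 0 \<le> w i" "sum w I = 1"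
  shows "\<exists>i\<in>I. f i \<le> (\<Sum>j\<in>I. w j * f j)"
proof
  have "I \<noteq> {}" using assms(3) by auto
  let ?i = "arg_min_on f I"
  show "?i \<in> I" using arg_min_if_finite(1)[OF assms(1) \<open>I \<noteq> {}\<close>] .
  have "f ?i = (\<Sum>j\<in>I. w j * f ?i)" using assms(3) by (simp flip: sum_distrib_right)
  also have "\<dots> \<le> (\<Sum>j\<in>I. w j * f j)"
    using assms arg_min_least[OF assms(1) \<open>I \<noteq> {}\<close>] by (intro sum_mono mult_left_mono) auto
  finally show "f ?i \<le> (\<Sum>j\<in>I. w j * f j)" .
qed

definition closed_nbhd :: "'a set \<Rightarrow> ('a \<Rightarrow> 'a \<Rightarrow> bool) \<Rightarrow> 'a \<Rightarrow> 'a set" where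
  "closed_nbhd V E v = insert v (neighbours V E v)"

definition undominated :: "'a set \<Rightarrow> ('a \<Rightarrow> 'a \<Rightarrow> bool) \<Rightarrow> 'a set \<Rightarrow> 'a set" where
  "undominated V E S = {v \<in> V. closed_nbhd V E v \<inter> S = {}}"

definition set_3RDF :: "'a set \<Rightarrow> ('a \<Rightarrow> 'a \<Rightarrow> bool) \<Rightarrow> 'a set \<Rightarrow> 'a \<Rightarrow> nat" where
  "set_3RDF V E S v = (if v \<in> S then 4 else if v \<in> undominated V E S then 3 else 0)"

lemma card_closed_nbhd:
  assumes "simple_graph V E"
  shows "card (closed_nbhd V E v) = degree V E v + 1"
proof -
  have "finite (neighbours V E v)" "v \<notin> neighbours V E v"
    using assms by (auto simp: simple_graph_def neighbours_def)
  then show ?thesis by (simp add: closed_nbhd_def degree_def)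
qed

lemma is_3RDF_set_3RDF:
  assumes "finite V" "S \<subseteq> V"
  shows "is_3RDF V E (set_3RDF V E S)"
  unfolding is_3RDF_def
proof (intro conjI ballI allI impI)
  fix v assume "v \<notin> V"
  then show "set_3RDF V E S v = 0" using assms(2) by (auto simp: set_3RDF_def undominated_def)
next
  fix v assume "v \<in> V"
  show "set_3RDF V E S v \<le> 4" by (simp add: set_3RDF_def)
next
  let ?h = "set_3RDF V E S"
  fix v assume "v \<in> V" "?h v < 3"
  then have "v \<notin> S" "v \<notin> undominated V E S" by (auto simp: set_3RDF_def split: if_splits)
  \<comment> \<open>A neighbour in \<open>S\<close> carries 4, which covers the 3 plus one for itself.\<close>
  with \<open>v \<in> V\<close> obtain w where w: "w \<in> neighbours V E v" "w \<in> S"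
    by (auto simp: undominated_def closed_nbhd_def)
  let ?A = "active_nbrs V E ?h v"
  have "finite ?A" using assms(1) by (simp add: active_nbrs_def neighbours_def)
  have "w \<in> ?A" using w by (simp add: active_nbrs_def set_3RDF_def)
  have "card ?A = card (?A - {w}) + 1"
    using card.remove[OF \<open>finite ?A\<close> \<open>w \<in> ?A\<close>] by simp
  moreover have "card (?A - {w}) \<le> sum ?h (?A - {w})"
    using sum_mono[of "?A - {w}" "\<lambda>_. 1::nat" ?h] by (simp add: active_nbrs_def)
  moreover have "sum ?h ?A = 4 + sum ?h (?A - {w})"
    using sum.remove[OF \<open>finite ?A\<close> \<open>w \<in> ?A\<close>, of ?h] w(2) by (simp add: set_3RDF_def)
  moreover have "sum ?h ?A \<le> sum ?h (insert v ?A)"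
    using \<open>finite ?A\<close> by (intro sum_mono2) auto
  ultimately show "card ?A + 3 \<le> sum ?h (insert v ?A)" by linarith
qed

lemma weight_set_3RDF:
  assumes "finite V" "S \<subseteq> V"
  shows "weight V (set_3RDF V E S) = 4 * card S + 3 * card (undominated V E S)"
proof -
  have "undominated V E S \<subseteq> V - S" by (auto simp: undominated_def closed_nbhd_def)
  then have "V \<inter> - S \<inter> undominated V E S = undominated V E S" by blast
  moreover have "V \<inter> S = S" using assms(2) by blast
  ultimately show ?thesis
    using assms(1) by (simp add: weight_def set_3RDF_def sum.If_cases)
qed

lemma triple_roman_domination_number_le:
  assumes "finite V" "is_3RDF V E h"
  shows "triple_roman_domination_number V E \<le> weight V h"
proof -
  have "{weight V g | g. is_3RDF V E g} \<subseteq> {..4 * card V}"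
  proof clarify
    fix g assume "is_3RDF V E g"
    then have "sum g V \<le> (\<Sum>v\<in>V. 4)" by (intro sum_mono) (simp add: is_3RDF_def)
    then show "weight V g \<le> 4 * card V" by (simp add: weight_def)
  qed
  then have "finite {weight V g | g. is_3RDF V E g}" by (rule finite_subset) simp
  then show ?thesis
    unfolding triple_roman_domination_number_def using assms(2) by (intro Min_le) auto
qed

lemma min_degree_le_degree:
  assumes "finite V" "v \<in> V"
  shows "min_degree V E \<le> degree V E v"
  using assms by (simp add: min_degree_def)

lemma neighbours_nonempty:
  assumes "simple_graph V E" "connected_graph V E" "card V \<ge> 2" "v \<in> V"
  shows "neighbours V E v \<noteq> {}"
proof -
  have "\<not> V \<subseteq> {v}"
  proof
    assume "V \<subseteq> {v}"
    then have "card V \<le> 1" using card_mono[of "{v}" V] by simp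
    with assms(3) show False by simp
  qed
  then obtain u where u: "u \<in> V" "u \<noteq> v" by blast
  have "E\<^sup>*\<^sup>* v u" using assms(2,4) u(1) by (simp add: connected_graph_def)
  then show ?thesis
  proof (cases rule: converse_rtranclpE)
    case base
    with u(2) show ?thesis by simp
  next
    case (step w)
    then show ?thesis using assms(1) by (auto simp: neighbours_def simple_graph_def)
  qed
qed

lemma min_degree_pos:
  assumes "simple_graph V E" "connected_graph V E" "card V \<ge> 2"
  shows "min_degree V E \<ge> 1"
proof -
  have "finite V" "V \<noteq> {}" using assms(1,3) by (auto simp: simple_graph_def)
  then have "Min (degree V E ` V) \<in> degree V E ` V" by (intro Min_in) auto
  then obtain v where "v \<in> V" "min_degree V E = degree V E v"
    unfolding min_degree_def by auto
  moreover have "finite (neighbours V E v)"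
    using \<open>finite V\<close> by (simp add: neighbours_def)
  ultimately show ?thesis
    using neighbours_nonempty[OF assms \<open>v \<in> V\<close>] by (simp add: degree_def Suc_le_eq card_gt_0_iff)
qed

lemma sum_bernoulli_weight_card_undominated:
  fixes q :: real
  assumes "simple_graph V E"
  shows "(\<Sum>S\<in>Pow V. bernoulli_weight V q S * card (undominated V E S))
       = (\<Sum>v\<in>V. (1 - q) ^ (degree V E v + 1))"
proof -
  have fin: "finite V" using assms by (simp add: simple_graph_def)
  have "(\<Sum>S\<in>Pow V. bernoulli_weight V q S * card (undominated V E S))
      = (\<Sum>S\<in>Pow V. \<Sum>v\<in>V. bernoulli_weight V q S * of_bool (closed_nbhd V E v \<inter> S = {}))"
  proof (rule sum.cong)
    fix S
    have "real (card (undominated V E S)) = (\<Sum>v\<in>V. of_bool (closed_nbhd V E v \<inter> S = {}))"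
      using fin by (simp add: sum_of_bool_eq undominated_def Collect_conj_eq)
    then show "bernoulli_weight V q S * card (undominated V E S)
        = (\<Sum>v\<in>V. bernoulli_weight V q S * of_bool (closed_nbhd V E v \<inter> S = {}))"
      by (simp add: sum_distrib_left)
  qed simp
  also have "\<dots> = (\<Sum>v\<in>V. \<Sum>S\<in>Pow V. bernoulli_weight V q S * of_bool (closed_nbhd V E v \<inter> S = {}))"
    by (rule sum.swap)
  also have "\<dots> = (\<Sum>v\<in>V. (1 - q) ^ card (closed_nbhd V E v))"
    using fin by (intro sum.cong sum_bernoulli_weight_disjoint)
      (auto simp: closed_nbhd_def neighbours_def)
  finally show ?thesis by (simp add: card_closed_nbhd[OF assms])
qed

lemma sum_bernoulli_weight_weight_set_3RDF:
  fixes q :: real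
  assumes "simple_graph V E"
  shows "(\<Sum>S\<in>Pow V. bernoulli_weight V q S * weight V (set_3RDF V E S))
       = 4 * card V * q + 3 * (\<Sum>v\<in>V. (1 - q) ^ (degree V E v + 1))"
proof -
  have fin: "finite V" using assms by (simp add: simple_graph_def)
  have "(\<Sum>S\<in>Pow V. bernoulli_weight V q S * weight V (set_3RDF V E S))
      = (\<Sum>S\<in>Pow V. 4 * (bernoulli_weight V q S * card S)
                     + 3 * (bernoulli_weight V q S * card (undominated V E S)))"
    by (intro sum.cong) (auto simp: weight_set_3RDF[OF fin] algebra_simps)
  also have "\<dots> = 4 * (\<Sum>S\<in>Pow V. bernoulli_weight V q S * card S)
      + 3 * (\<Sum>S\<in>Pow V. bernoulli_weight V q S * card (undominated V E S))"
    by (simp add: sum.distrib sum_distrib_left)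
  also have "\<dots> = 4 * (card V * q) + 3 * (\<Sum>v\<in>V. (1 - q) ^ (degree V E v + 1))"
    by (simp only: sum_bernoulli_weight_card[OF fin] sum_bernoulli_weight_card_undominated[OF assms])
  finally show ?thesis by simp
qed

lemma triple_roman_domination_number_le_exp:
  fixes q :: real
  assumes "simple_graph V E" "0 \<le> q" "q \<le> 1"
  shows "triple_roman_domination_number V E
    \<le> card V * (4 * q + 3 * exp (- q * (real (min_degree V E) + 1)))"
proof -
  have fin: "finite V" using assms(1) by (simp add: simple_graph_def)
  let ?w = "bernoulli_weight V q"
  have "\<exists>S\<in>Pow V. weight V (set_3RDF V E S) \<le> (\<Sum>T\<in>Pow V. ?w T * weight V (set_3RDF V E T))"
    by (rule ex_le_weighted_average)
      (use fin assms(2,3) in \<open>auto intro: bernoulli_weight_nonneg sum_bernoulli_weight\<close>)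
  then obtain S where "S \<in> Pow V"
    and S: "weight V (set_3RDF V E S) \<le> (\<Sum>T\<in>Pow V. ?w T * weight V (set_3RDF V E T))"
    by blast
  have exp_bound: "(1 - q) ^ (degree V E v + 1) \<le> exp (- q * (real (min_degree V E) + 1))"
    if "v \<in> V" for v
  proof -
    have "(1 - q) ^ (degree V E v + 1) \<le> (1 - q) ^ (min_degree V E + 1)"
      using assms(2,3) min_degree_le_degree[OF fin that] by (intro power_decreasing) auto
    also have "\<dots> \<le> exp (- q) ^ (min_degree V E + 1)"
      using assms(3) exp_ge_add_one_self[of "- q"] by (intro power_mono) auto
    also have "\<dots> = exp (real (min_degree V E + 1) * (- q))"
      by (rule exp_of_nat_mult[symmetric])
    also have "\<dots> = exp (- q * (real (min_degree V E) + 1))"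
      by (simp add: algebra_simps)
    finally show ?thesis .
  qed
  have "triple_roman_domination_number V E \<le> weight V (set_3RDF V E S)"
    using \<open>S \<in> Pow V\<close> fin by (intro triple_roman_domination_number_le is_3RDF_set_3RDF) auto
  also note S
  also have "(\<Sum>T\<in>Pow V. ?w T * weight V (set_3RDF V E T))
      \<le> 4 * card V * q + 3 * (\<Sum>v\<in>V. exp (- q * (real (min_degree V E) + 1)))"
    unfolding sum_bernoulli_weight_weight_set_3RDF[OF assms(1)]
    using exp_bound by (intro add_left_mono mult_left_mono sum_mono) auto
  finally show ?thesis by (simp add: algebra_simps)
qed

theorem proposition11:
  fixes V :: "'a set" and E :: "'a \<Rightarrow> 'a \<Rightarrow> bool"
  assumes "simple_graph V E" and "connected_graph V E" and "card V \<ge> 2"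
  shows "real (triple_roman_domination_number V E)
     \<le> of_int \<lfloor>4 * real (card V) / (real (min_degree V E) + 1)
                  * (ln (3 * (real (min_degree V E) + 1) / 4) + 1)\<rfloor>"
proof -
  define d where "d = real (min_degree V E) + 1"
  have "d \<ge> 2" using min_degree_pos[OF assms] by (simp add: d_def)
  \<comment> \<open>The minimiser of \<open>4 q + 3 exp (- q d)\<close>.\<close>
  define q where "q = ln (3 * d / 4) / d"
  have "0 \<le> q" using \<open>d \<ge> 2\<close> by (simp add: q_def)
  have "ln (3 * d / 4) \<le> 3 * d / 4 - 1" using \<open>d \<ge> 2\<close> by (intro ln_le_minus_one) auto
  then have "q \<le> 1" using \<open>d \<ge> 2\<close> by (simp add: q_def divide_le_eq)
  have "exp (- q * d) = 4 / (3 * d)" using \<open>d \<ge> 2\<close> by (simp add: q_def exp_minus)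
  have "real (triple_roman_domination_number V E) \<le> card V * (4 * q + 3 * exp (- q * d))"
    using triple_roman_domination_number_le_exp[OF assms(1) \<open>0 \<le> q\<close> \<open>q \<le> 1\<close>]
    unfolding d_def .
  also have "\<dots> = 4 * real (card V) / d * (ln (3 * d / 4) + 1)"
    using \<open>exp (- q * d) = 4 / (3 * d)\<close> \<open>d \<ge> 2\<close> by (simp add: q_def field_simps)
  finally have "int (triple_roman_domination_number V E) \<le> \<lfloor>4 * real (card V) / d * (ln (3 * d / 4) + 1)\<rfloor>"
    by (simp add: le_floor_iff)
  then show ?thesis by (simp add: d_def)
qed

end
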